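(* Let $\bar x\in M$ be a local minimizer of MPOC at which LICQ holds. Then $\bar x$ is a T-stationary point of MPOC.
   Context: MPOC: minimize $f(x)$ subject to $x\in M=\{x\in\mathbb{R}^n \mid h_i(x)=0,\ i\in I;\ g_j(x)\ge 0,\ j\in J;\ F_{1,m}(x)F_{2,m}(x)=0,\ F_{2,m}(x)\ge 0,\ m=1,\dots,k\}$ with $f,h_i,g_j,F_{1,m},F_{2,m}\in C^2(\mathbb{R}^n,\mathbb{R})$, $I,J$ finite. For $\bar x\in M$: $J_0(\bar x)=\{j\in J\mid g_j(\bar x)=0\}$, $a_{00}(\bar x)=\{m\mid F_{1,m}(\bar x)=0=F_{2,m}(\bar x)\}$, $a_{01}(\bar x)=\{m\mid F_{1,m}(\bar x)=0,F_{2,m}(\bar x)>0\}$, $a_{10}(\bar x)=\{m\mid F_{1,m}(\bar x)\ne0,F_{2,m}(\bar x)=0\}$. LICQ at $\bar x$: the vectors $Dh_i(\bar x)$ ($i\in I$), $Dg_j(\bar x)$ ($j\in J_0(\bar x)$), $DF_{1,m}(\bar x)$ ($m\in a_{01}(\bar x)\cup a_{00}(\bar x)$), $DF_{2,m}(\bar x)$ ($m\in a_{10}(\bar x)\cup a_{00}(\bar x)$) are linearly independent. T-stationarity: $\bar x\in M$ is T-stationary if there are multipliers $\bar\lambda_i$ ($i\in I$), $\bar\mu_j$ ($j\in J_0(\bar x)$), $\bar\sigma_{1,m}$ ($m\in a_{01}(\bar x)$), $\bar\sigma_{2,m}$ ($m\in a_{10}(\bar x)$), $\bar\varrho_{1,m},\bar\varrho_{2,m}$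 ($m\in a_{00}(\bar x)$) with $Df(\bar x)=\sum_{i\in I}\bar\lambda_iDh_i(\bar x)+\sum_{j\in J_0(\bar x)}\bar\mu_jDg_j(\bar x)+\sum_{m\in a_{01}(\bar x)}\bar\sigma_{1,m}DF_{1,m}(\bar x)+\sum_{m\in a_{10}(\bar x)}\bar\sigma_{2,m}DF_{2,m}(\bar x)+\sum_{m\in a_{00}(\bar x)}(\bar\varrho_{1,m}DF_{1,m}(\bar x)+\bar\varrho_{2,m}DF_{2,m}(\bar x))$, $\bar\mu_j\ge0$ for all $j\in J_0(\bar x)$, and for every $m\in a_{00}(\bar x)$: $\bar\varrho_{1,m}=0$ or $\bar\varrho_{2,m}\le 0$. *)

theory Defs
  imports "HOL-Analysis.Analysis"
begin

definition C2 :: "(real ^ 'n \<Rightarrow> real) \<Rightarrow> bool" where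
  "C2 \<phi> \<longleftrightarrow> (\<exists>G G'. (\<forall>x. GDERIV \<phi> x :> G x) \<and>
      (\<forall>x. (G has_derivative G' x) (at x)) \<and>
      (\<forall>v. continuous_on UNIV (\<lambda>x. G' x v)))"

definition grad :: "(real ^ 'n \<Rightarrow> real) \<Rightarrow> real ^ 'n \<Rightarrow> real ^ 'n" where
  "grad \<phi> x = (SOME D. GDERIV \<phi> x :> D)"

definition mpoc_feasible ::
  "('i \<Rightarrow> real ^ 'n \<Rightarrow> real) \<Rightarrow> 'i set \<Rightarrow> ('j \<Rightarrow> real ^ 'n \<Rightarrow> real) \<Rightarrow> 'j set \<Rightarrow>
   (nat \<Rightarrow> real ^ 'n \<Rightarrow> real) \<Rightarrow> (nat \<Rightarrow> real ^ 'n \<Rightarrow> real) \<Rightarrow> nat \<Rightarrow> (real ^ 'n) set" where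
  "mpoc_feasible h I g J F1 F2 k = {x. (\<forall>i\<in>I. h i x = 0) \<and> (\<forall>j\<in>J. g j x \<ge> 0) \<and>
      (\<forall>m\<in>{1..k}. F1 m x * F2 m x = 0 \<and> F2 m x \<ge> 0)}"

definition J0 :: "('j \<Rightarrow> real ^ 'n \<Rightarrow> real) \<Rightarrow> 'j set \<Rightarrow> real ^ 'n \<Rightarrow> 'j set" where
  "J0 g J x = {j\<in>J. g j x = 0}"

definition a00 :: "(nat \<Rightarrow> real ^ 'n \<Rightarrow> real) \<Rightarrow> (nat \<Rightarrow> real ^ 'n \<Rightarrow> real) \<Rightarrow> nat \<Rightarrow> real ^ 'n \<Rightarrow> nat set" where
  "a00 F1 F2 k x = {m\<in>{1..k}. F1 m x = 0 \<and> F2 m x = 0}"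

definition a01 :: "(nat \<Rightarrow> real ^ 'n \<Rightarrow> real) \<Rightarrow> (nat \<Rightarrow> real ^ 'n \<Rightarrow> real) \<Rightarrow> nat \<Rightarrow> real ^ 'n \<Rightarrow> nat set" where
  "a01 F1 F2 k x = {m\<in>{1..k}. F1 m x = 0 \<and> F2 m x > 0}"

definition a10 :: "(nat \<Rightarrow> real ^ 'n \<Rightarrow> real) \<Rightarrow> (nat \<Rightarrow> real ^ 'n \<Rightarrow> real) \<Rightarrow> nat \<Rightarrow> real ^ 'n \<Rightarrow> nat set" where
  "a10 F1 F2 k x = {m\<in>{1..k}. F1 m x \<noteq> 0 \<and> F2 m x = 0}"

definition LICQ ::
  "('i \<Rightarrow> real ^ 'n \<Rightarrow> real) \<Rightarrow> 'i set \<Rightarrow> ('j \<Rightarrow> real ^ 'n \<Rightarrow> real) \<Rightarrow> 'j set \<Rightarrow>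
   (nat \<Rightarrow> real ^ 'n \<Rightarrow> real) \<Rightarrow> (nat \<Rightarrow> real ^ 'n \<Rightarrow> real) \<Rightarrow> nat \<Rightarrow> real ^ 'n \<Rightarrow> bool" where
  "LICQ h I g J F1 F2 k x \<longleftrightarrow>
    (\<forall>(a::'i \<Rightarrow> real) (b::'j \<Rightarrow> real) (c::nat \<Rightarrow> real) (d::nat \<Rightarrow> real).
      (\<Sum>i\<in>I. a i *\<^sub>R grad (h i) x) + (\<Sum>j\<in>J0 g J x. b j *\<^sub>R grad (g j) x)
      + (\<Sum>m\<in>a01 F1 F2 k x \<union> a00 F1 F2 k x. c m *\<^sub>R grad (F1 m) x)
      + (\<Sum>m\<in>a10 F1 F2 k x \<union> a00 F1 F2 k x. d m *\<^sub>R grad (F2 m) x) = 0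
      \<longrightarrow> (\<forall>i\<in>I. a i = 0) \<and> (\<forall>j\<in>J0 g J x. b j = 0)
          \<and> (\<forall>m\<in>a01 F1 F2 k x \<union> a00 F1 F2 k x. c m = 0)
          \<and> (\<forall>m\<in>a10 F1 F2 k x \<union> a00 F1 F2 k x. d m = 0))"

definition T_stationary ::
  "(real ^ 'n \<Rightarrow> real) \<Rightarrow> ('i \<Rightarrow> real ^ 'n \<Rightarrow> real) \<Rightarrow> 'i set \<Rightarrow> ('j \<Rightarrow> real ^ 'n \<Rightarrow> real) \<Rightarrow> 'j set \<Rightarrow>
   (nat \<Rightarrow> real ^ 'n \<Rightarrow> real) \<Rightarrow> (nat \<Rightarrow> real ^ 'n \<Rightarrow> real) \<Rightarrow> nat \<Rightarrow> real ^ 'n \<Rightarrow> bool" where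
  "T_stationary f h I g J F1 F2 k x \<longleftrightarrow> x \<in> mpoc_feasible h I g J F1 F2 k \<and>
    (\<exists>(lam::'i \<Rightarrow> real) (mu::'j \<Rightarrow> real) (s1::nat \<Rightarrow> real) (s2::nat \<Rightarrow> real)
       (r1::nat \<Rightarrow> real) (r2::nat \<Rightarrow> real).
      grad f x = (\<Sum>i\<in>I. lam i *\<^sub>R grad (h i) x) + (\<Sum>j\<in>J0 g J x. mu j *\<^sub>R grad (g j) x)
        + (\<Sum>m\<in>a01 F1 F2 k x. s1 m *\<^sub>R grad (F1 m) x)
        + (\<Sum>m\<in>a10 F1 F2 k x. s2 m *\<^sub>R grad (F2 m) x)
        + (\<Sum>m\<in>a00 F1 F2 k x. r1 m *\<^sub>R grad (F1 m) x + r2 m *\<^sub>R grad (F2 m) x)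
      \<and> (\<forall>j\<in>J0 g J x. mu j \<ge> 0)
      \<and> (\<forall>m\<in>a00 F1 F2 k x. r1 m = 0 \<or> r2 m \<le> 0))"

definition local_minimizer :: "(real ^ 'n \<Rightarrow> real) \<Rightarrow> (real ^ 'n) set \<Rightarrow> real ^ 'n \<Rightarrow> bool" where
  "local_minimizer f S x \<longleftrightarrow> x \<in> S \<and> (\<exists>e>0. \<forall>y\<in>S. dist y x < e \<longrightarrow> f x \<le> f y)"

end

theory Submission
  imports Defs
begin

text \<open>Near \<open>xbar\<close> the feasible set contains the tightened set on which h i, F1 m (m \<in> a01) and
  F2 m (m \<in> a10 \<union> a00) vanish and g j \<ge> 0 (j \<in> J0), since all other constraints hold strictly at
  \<open>xbar\<close>. Hence \<open>xbar\<close> locally minimizes f subject to these standard constraints, whose gradients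
  are linearly independent by LICQ, and KKT multipliers for them are T-stationarity multipliers
  with \<rho>1 = 0 on a00.

  The KKT conditions come from the quadratic penalty method: minimizers y t of
  f y + |y - xbar|^4 + t P y over a small closed ball, P being the squared constraint violation,
  converge to \<open>xbar\<close>, and their stationarity equations write Df (y t) + o(1) as a combination of the
  constraint gradients at y t with coefficients -t \<psi>'(u a (y t)). As these gradients stay linearly
  independent near \<open>xbar\<close>, the coefficients converge, and their limits are the multipliers;
  they are nonnegative on the inequality constraints because \<psi>' \<le> 0 there.\<close>

section \<open>Coefficients of perturbed independent families\<close>

lemma in_span_image_imp_lincomb:
  fixes v :: "'a \<Rightarrow> 'b::real_vector"
  assumes "x \<in> span (v ` A)" and "finite A"
  shows "\<exists>c. x = (\<Sum>a\<in>A. c a *\<^sub>R v a)"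
  using assms(1)
proof (induction rule: span_induct_alt)
  case base
  show ?case by (intro exI[of _ "\<lambda>_. 0"]) simp
next
  case (step r w y)
  then obtain a c where a: "a \<in> A" "w = v a" and c: "y = (\<Sum>a\<in>A. c a *\<^sub>R v a)" by blast
  have "r *\<^sub>R w + y = (\<Sum>b\<in>A. (c b + (if b = a then r else 0)) *\<^sub>R v b)"
    using a assms(2)
    by (simp add: c scaleR_add_left sum.distrib if_distrib[of "\<lambda>r. r *\<^sub>R _"] cong: if_cong)
  then show ?case by (intro exI[of _ "\<lambda>b. c b + (if b = a then r else 0)"])
qed

lemma exists_biorthogonal:
  fixes v :: "'a \<Rightarrow> 'b::euclidean_space"
  assumes fin: "finite S"
    and indep: "\<forall>\<alpha>. (\<Sum>a\<in>S. \<alpha> a *\<^sub>R v a) = 0 \<longrightarrow> (\<forall>a\<in>S. \<alpha> a = 0)"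
  shows "\<exists>z. \<forall>a\<in>S. \<forall>b\<in>S. v a \<bullet> z b = (if a = b then 1 else 0)"
proof -
  have "\<exists>z. \<forall>a\<in>S. v a \<bullet> z = (if a = b then 1 else 0)" if bS: "b \<in> S" for b
  proof -
    obtain p q where p: "p \<in> span (v ` (S - {b}))"
      and q: "\<And>w. w \<in> span (v ` (S - {b})) \<Longrightarrow> orthogonal q w" and vb: "v b = p + q"
      using orthogonal_subspace_decomp_exists by blast
    have "v b \<notin> span (v ` (S - {b}))"
    proof
      assume "v b \<in> span (v ` (S - {b}))"
      then obtain c where c: "v b = (\<Sum>a\<in>S - {b}. c a *\<^sub>R v a)"
        using in_span_image_imp_lincomb fin by blast
      have "(\<Sum>a\<in>S. (if a = b then -1 else c a) *\<^sub>R v a) = 0"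
        using fin bS by (simp add: sum.remove[of S b] c cong: if_cong)
      then show False using indep bS by force
    qed
    then have "q \<noteq> 0" using p vb by auto
    have "v a \<bullet> q = (if a = b then q \<bullet> q else 0)" if "a \<in> S" for a
    proof (cases "a = b")
      case True
      then show ?thesis using vb q[OF p] by (simp add: inner_add_left inner_add_right orthogonal_def inner_commute)
    next
      case False
      then have "v a \<in> span (v ` (S - {b}))" using that by (intro span_base) auto
      then show ?thesis using q False by (simp add: orthogonal_def) (metis inner_commute)
    qed
    then show ?thesis using \<open>q \<noteq> 0\<close> by (intro exI[of _ "q /\<^sub>R (q \<bullet> q)"]) simp
  qed
  then show ?thesis by metis
qed

lemma lincomb_coeff_deviation:
  fixes w z :: "'a \<Rightarrow> 'b::real_inner"
  assumes "finite S" and "b \<in> S"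
    and "\<forall>a\<in>S. \<bar>w a \<bullet> z b - (if a = b then 1 else 0)\<bar> \<le> e"
  shows "\<bar>\<gamma> b - (\<Sum>a\<in>S. \<gamma> a *\<^sub>R w a) \<bullet> z b\<bar> \<le> (\<Sum>a\<in>S. \<bar>\<gamma> a\<bar>) * e"
proof -
  have "(\<Sum>a\<in>S. \<gamma> a *\<^sub>R w a) \<bullet> z b
      = (\<Sum>a\<in>S. \<gamma> a * (w a \<bullet> z b - (if a = b then 1 else 0))) + \<gamma> b"
    using assms(1,2)
    by (simp add: inner_sum_left right_diff_distrib sum_subtractf if_distrib[of "\<lambda>x. _ * x"] cong: if_cong)
  then have "\<bar>\<gamma> b - (\<Sum>a\<in>S. \<gamma> a *\<^sub>R w a) \<bullet> z b\<bar>
      = \<bar>\<Sum>a\<in>S. \<gamma> a * (w a \<bullet> z b - (if a = b then 1 else 0))\<bar>" by simp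
  also have "\<dots> \<le> (\<Sum>a\<in>S. \<bar>\<gamma> a\<bar> * e)"
  proof (rule order_trans[OF sum_abs sum_mono])
    fix a assume "a \<in> S"
    then show "\<bar>\<gamma> a * (w a \<bullet> z b - (if a = b then 1 else 0))\<bar> \<le> \<bar>\<gamma> a\<bar> * e"
      unfolding abs_mult using assms(3) by (intro mult_left_mono) auto
  qed
  finally show ?thesis by (simp add: sum_distrib_right)
qed

lemma lincomb_coeff_bound:
  fixes w z :: "'a \<Rightarrow> 'b::real_inner"
  assumes "finite S"
    and "\<forall>a\<in>S. \<forall>b\<in>S. \<bar>w a \<bullet> z b - (if a = b then 1 else 0)\<bar> \<le> e"
    and "real (card S) * e \<le> 1/2"
  shows "(\<Sum>a\<in>S. \<bar>\<gamma> a\<bar>) \<le> 2 * (\<Sum>b\<in>S. \<bar>(\<Sum>a\<in>S. \<gamma> a *\<^sub>R w a) \<bullet> z b\<bar>)"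
proof -
  let ?R = "\<Sum>a\<in>S. \<gamma> a *\<^sub>R w a" and ?\<Gamma> = "\<Sum>a\<in>S. \<bar>\<gamma> a\<bar>"
  have "?\<Gamma> \<le> (\<Sum>b\<in>S. \<bar>?R \<bullet> z b\<bar> + ?\<Gamma> * e)"
  proof (rule sum_mono)
    fix b assume "b \<in> S"
    then have "\<bar>\<gamma> b - ?R \<bullet> z b\<bar> \<le> ?\<Gamma> * e"
      using assms(2) by (intro lincomb_coeff_deviation[OF assms(1)]) auto
    then show "\<bar>\<gamma> b\<bar> \<le> \<bar>?R \<bullet> z b\<bar> + ?\<Gamma> * e" by linarith
  qed
  also have "\<dots> = (\<Sum>b\<in>S. \<bar>?R \<bullet> z b\<bar>) + ?\<Gamma> * (real (card S) * e)"
    by (simp add: sum.distrib)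
  also have "\<dots> \<le> (\<Sum>b\<in>S. \<bar>?R \<bullet> z b\<bar>) + ?\<Gamma> * (1/2)"
    using assms(3) by (intro add_left_mono mult_left_mono) auto
  finally show ?thesis by simp
qed

lemma lincomb_coeff_deviation_le:
  fixes w z :: "'a \<Rightarrow> 'b::real_inner"
  assumes "finite S" and "b \<in> S"
    and defect: "\<forall>a\<in>S. \<forall>b\<in>S. \<bar>w a \<bullet> z b - (if a = b then 1 else 0)\<bar> \<le> e"
    and "real (card S) * e \<le> 1/2"
  shows "\<bar>\<gamma> b - (\<Sum>a\<in>S. \<gamma> a *\<^sub>R w a) \<bullet> z b\<bar> \<le> 2 * (\<Sum>b\<in>S. \<bar>(\<Sum>a\<in>S. \<gamma> a *\<^sub>R w a) \<bullet> z b\<bar>) * e"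
proof -
  have "0 \<le> e" using defect \<open>b \<in> S\<close> by (meson abs_ge_zero order_trans)
  have "\<bar>\<gamma> b - (\<Sum>a\<in>S. \<gamma> a *\<^sub>R w a) \<bullet> z b\<bar> \<le> (\<Sum>a\<in>S. \<bar>\<gamma> a\<bar>) * e"
    using defect \<open>b \<in> S\<close> by (intro lincomb_coeff_deviation[OF assms(1,2)]) auto
  also have "\<dots> \<le> 2 * (\<Sum>b\<in>S. \<bar>(\<Sum>a\<in>S. \<gamma> a *\<^sub>R w a) \<bullet> z b\<bar>) * e"
    using lincomb_coeff_bound[OF assms(1,3,4)] \<open>0 \<le> e\<close> by (rule mult_right_mono)
  finally show ?thesis .
qed

lemma tendsto_coeff_almost_biorthogonal:
  fixes w :: "'a \<Rightarrow> nat \<Rightarrow> 'b::real_inner"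
  assumes fin: "finite S" and "b \<in> S" and e: "e \<longlonglongrightarrow> 0"
    and defect: "\<And>t a b. a \<in> S \<Longrightarrow> b \<in> S \<Longrightarrow> \<bar>w a t \<bullet> z b - (if a = b then 1 else 0)\<bar> \<le> e t"
    and R: "R \<longlonglongrightarrow> r" and lincomb: "\<forall>\<^sub>F t in sequentially. R t = (\<Sum>a\<in>S. \<gamma> t a *\<^sub>R w a t)"
  shows "(\<lambda>t. \<gamma> t b) \<longlonglongrightarrow> r \<bullet> z b"
proof -
  define B where "B = (\<Sum>b\<in>S. \<bar>r \<bullet> z b\<bar>) + 1"
  have "(\<lambda>t. \<Sum>b\<in>S. \<bar>R t \<bullet> z b\<bar>) \<longlonglongrightarrow> (\<Sum>b\<in>S. \<bar>r \<bullet> z b\<bar>)" by (intro tendsto_intros R)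
  then have R_bounded: "\<forall>\<^sub>F t in sequentially. (\<Sum>b\<in>S. \<bar>R t \<bullet> z b\<bar>) < B"
    unfolding B_def by (rule order_tendstoD) simp
  have "(\<lambda>t. real (card S) * e t) \<longlonglongrightarrow> real (card S) * 0" by (intro tendsto_intros e)
  then have e_small: "\<forall>\<^sub>F t in sequentially. real (card S) * e t < 1/2"
    by (rule order_tendstoD) simp
  have "(\<lambda>t. \<gamma> t b - R t \<bullet> z b) \<longlonglongrightarrow> 0"
  proof (rule Lim_null_comparison)
    show "\<forall>\<^sub>F t in sequentially. norm (\<gamma> t b - R t \<bullet> z b) \<le> 2 * B * e t"
      using lincomb e_small R_bounded
    proof eventually_elim
      case (elim t)
      have "0 \<le> e t" using defect[OF \<open>b \<in> S\<close> \<open>b \<in> S\<close>] by (meson abs_ge_zero order_trans)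
      have "\<bar>\<gamma> t b - R t \<bullet> z b\<bar> \<le> 2 * (\<Sum>b\<in>S. \<bar>R t \<bullet> z b\<bar>) * e t"
        unfolding elim(1) using defect elim(2)
        by (intro lincomb_coeff_deviation_le[OF fin \<open>b \<in> S\<close>]) auto
      also have "\<dots> \<le> 2 * B * e t"
        using elim(3) \<open>0 \<le> e t\<close> by (intro mult_right_mono) auto
      finally show ?case by simp
    qed
    show "(\<lambda>t. 2 * B * e t) \<longlonglongrightarrow> 0" using tendsto_mult_right_zero[OF e] by simp
  qed
  from tendsto_add[OF this tendsto_inner[OF R tendsto_const[of "z b"]]] show ?thesis by simp
qed

lemma tendsto_lincomb_coeffs:
  fixes w :: "'a \<Rightarrow> nat \<Rightarrow> 'b::euclidean_space"
  assumes fin: "finite S" and w: "\<And>a. a \<in> S \<Longrightarrow> w a \<longlonglongrightarrow> v a"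
    and indep: "\<forall>\<alpha>. (\<Sum>a\<in>S. \<alpha> a *\<^sub>R v a) = 0 \<longrightarrow> (\<forall>a\<in>S. \<alpha> a = 0)"
    and R: "R \<longlonglongrightarrow> r" and lincomb: "\<forall>\<^sub>F t in sequentially. R t = (\<Sum>a\<in>S. \<gamma> t a *\<^sub>R w a t)"
  obtains c where "\<And>a. a \<in> S \<Longrightarrow> (\<lambda>t. \<gamma> t a) \<longlonglongrightarrow> c a" and "r = (\<Sum>a\<in>S. c a *\<^sub>R v a)"
proof -
  obtain z where z: "\<forall>a\<in>S. \<forall>b\<in>S. v a \<bullet> z b = (if a = b then 1 else 0)"
    using exists_biorthogonal[OF fin indep] by blast
  define e where "e t = (\<Sum>a\<in>S. \<Sum>b\<in>S. \<bar>w a t \<bullet> z b - (if a = b then 1 else 0)\<bar>)" for t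
  have "e \<longlonglongrightarrow> (\<Sum>a\<in>S. \<Sum>b\<in>S. \<bar>v a \<bullet> z b - (if a = b then 1 else 0)\<bar>)"
    unfolding e_def by (intro tendsto_intros w)
  then have e: "e \<longlonglongrightarrow> 0" using z by simp
  have defect: "\<bar>w a t \<bullet> z b - (if a = b then 1 else 0)\<bar> \<le> e t" if "a \<in> S" "b \<in> S" for t a b
  proof -
    have "\<bar>w a t \<bullet> z b - (if a = b then 1 else 0)\<bar>
        \<le> (\<Sum>b\<in>S. \<bar>w a t \<bullet> z b - (if a = b then 1 else 0)\<bar>)"
      by (rule member_le_sum) (use fin that in auto)
    also have "\<dots> \<le> e t"
      unfolding e_def by (rule member_le_sum) (use fin that in \<open>auto intro: sum_nonneg\<close>)
    finally show ?thesis .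
  qed
  have coeff: "(\<lambda>t. \<gamma> t b) \<longlonglongrightarrow> r \<bullet> z b" if "b \<in> S" for b
    using fin that e defect R lincomb by (rule tendsto_coeff_almost_biorthogonal)
  have "(\<lambda>t. \<Sum>a\<in>S. \<gamma> t a *\<^sub>R w a t) \<longlonglongrightarrow> r"
    using tendsto_cong[OF lincomb] R by blast
  moreover have "(\<lambda>t. \<Sum>a\<in>S. \<gamma> t a *\<^sub>R w a t) \<longlonglongrightarrow> (\<Sum>a\<in>S. (r \<bullet> z a) *\<^sub>R v a)"
    by (intro tendsto_sum tendsto_scaleR coeff w)
  ultimately have "r = (\<Sum>a\<in>S. (r \<bullet> z a) *\<^sub>R v a)" by (rule LIMSEQ_unique)
  with coeff show thesis by (rule that)
qed

section \<open>Quadratic penalty\<close>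

lemma has_real_derivative_min_zero_square:
  "((\<lambda>s::real. (min s 0)^2) has_real_derivative 2 * min s 0) (at s)"
proof -
  consider "s < 0" | "s > 0" | "s = 0" by linarith
  then show ?thesis
  proof cases
    case 1
    have "((\<lambda>s::real. s^2) has_real_derivative 2 * s) (at s)"
      by (auto intro!: derivative_eq_intros)
    then have "((\<lambda>s::real. (min s 0)^2) has_real_derivative 2 * s) (at s)"
      by (rule has_field_derivative_transform_within_open[where S="{..<0}"]) (use 1 in auto)
    then show ?thesis using 1 by simp
  next
    case 2
    have "((\<lambda>s::real. 0) has_real_derivative 0) (at s)" by (rule DERIV_const)
    then have "((\<lambda>s::real. (min s 0)^2) has_real_derivative 0) (at s)"
      by (rule has_field_derivative_transform_within_open[where S="{0<..}"]) (use 2 in auto)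
    then show ?thesis using 2 by simp
  next
    case 3
    have "((\<lambda>d::real. (min d 0)^2 / d) \<longlongrightarrow> 0) (at 0)"
    proof (rule Lim_null_comparison)
      show "\<forall>\<^sub>F d in at 0. norm ((min d 0)^2 / d) \<le> \<bar>d\<bar>"
        by (auto simp: power2_eq_square abs_mult min_def)
      show "((\<lambda>d::real. \<bar>d\<bar>) \<longlongrightarrow> 0) (at 0)"
        using tendsto_rabs[OF tendsto_ident_at[of 0 UNIV]] by simp
    qed
    then show ?thesis using 3 by (simp add: DERIV_def)
  qed
qed

definition penalty :: "bool \<Rightarrow> real \<Rightarrow> real" where
  "penalty ineq s = (if ineq then (min s 0)^2 else s^2)"

definition penalty' :: "bool \<Rightarrow> real \<Rightarrow> real" where
  "penalty' ineq s = (if ineq then 2 * min s 0 else 2 * s)"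

lemma penalty_has_real_derivative: "(penalty ineq has_real_derivative penalty' ineq s) (at s)"
proof (cases ineq)
  case True
  then show ?thesis
    unfolding penalty_def penalty'_def using has_real_derivative_min_zero_square by simp
next
  case False
  then show ?thesis
    unfolding penalty_def penalty'_def by (auto intro!: derivative_eq_intros)
qed

lemma penalty_nonneg: "0 \<le> penalty ineq s"
  by (simp add: penalty_def)

lemma penalty_eq_0_iff: "penalty ineq s = 0 \<longleftrightarrow> (if ineq then 0 \<le> s else s = 0)"
  by (auto simp: penalty_def min_def)

lemma penalty'_True_nonpos: "penalty' True s \<le> 0"
  by (simp add: penalty'_def)

lemma has_derivative_penalty_sum:
  fixes u :: "'a \<Rightarrow> 'b::real_inner \<Rightarrow> real"
  assumes "\<And>a. a \<in> S \<Longrightarrow> (u a has_derivative (\<lambda>h. G a z \<bullet> h)) (at z)"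
  shows "((\<lambda>y. \<Sum>a\<in>S. penalty (a \<in> C) (u a y)) has_derivative
      (\<lambda>h. (\<Sum>a\<in>S. penalty' (a \<in> C) (u a z) *\<^sub>R G a z) \<bullet> h)) (at z)"
proof -
  have "((\<lambda>y. \<Sum>a\<in>S. penalty (a \<in> C) (u a y)) has_derivative
      (\<lambda>h. \<Sum>a\<in>S. penalty' (a \<in> C) (u a z) * (G a z \<bullet> h))) (at z)"
    using has_derivative_compose[OF assms
        penalty_has_real_derivative[unfolded has_field_derivative_def]]
    by (intro has_derivative_sum) (simp add: o_def)
  then show ?thesis by (simp add: inner_sum_left)
qed

lemma has_derivative_dist_pow4:
  fixes x :: "'a::real_inner"
  shows "((\<lambda>y. ((y - x) \<bullet> (y - x))^2) has_derivative
      (\<lambda>h. ((4 * ((z - x) \<bullet> (z - x))) *\<^sub>R (z - x)) \<bullet> h)) (at z)"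
proof -
  have "((\<lambda>y. (y - x) \<bullet> (y - x)) has_derivative (\<lambda>h. 2 * ((z - x) \<bullet> h))) (at z)"
    by (rule has_derivative_eq_rhs, (rule derivative_intros)+) (auto simp: inner_commute)
  from has_derivative_power[OF this, of 2] show ?thesis
    by (rule has_derivative_eq_rhs) (simp add: fun_eq_iff)
qed

lemma eventually_penalized_pos:
  fixes q P :: "'a::topological_space \<Rightarrow> real"
  assumes "compact K" and "continuous_on K q" and "continuous_on K P"
    and "\<forall>z\<in>K. 0 \<le> P z" and "\<forall>z\<in>K. P z = 0 \<longrightarrow> 0 < q z"
  shows "\<forall>\<^sub>F t in sequentially. \<forall>z\<in>K. 0 < q z + real t * P z"
proof (cases "K = {}")
  case False
  obtain z0 where z0: "z0 \<in> K" "\<forall>z\<in>K. max (q z0) (P z0) \<le> max (q z) (P z)"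
    using continuous_attains_inf[OF assms(1) False continuous_on_max[OF assms(2,3)]] by blast
  define \<eta> where "\<eta> = max (q z0) (P z0)"
  have "0 < \<eta>"
    using assms(4,5) z0(1) unfolding \<eta>_def by (cases "P z0 = 0") (auto simp: less_max_iff_disj)
  obtain z1 where z1: "z1 \<in> K" "\<forall>z\<in>K. q z1 \<le> q z"
    using continuous_attains_inf[OF assms(1) False assms(2)] by blast
  obtain N :: nat where N: "\<bar>q z1\<bar> / \<eta> < real N" using reals_Archimedean2 by blast
  show ?thesis
  proof (rule eventually_sequentiallyI[of N], intro ballI)
    fix t z assume "N \<le> t" and z: "z \<in> K"
    have "\<bar>q z1\<bar> < real N * \<eta>" using N \<open>0 < \<eta>\<close> by (simp add: divide_less_eq)
    also have "\<dots> \<le> real t * \<eta>" using \<open>N \<le> t\<close> \<open>0 < \<eta>\<close> by simp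
    finally have q_lower: "- (real t * \<eta>) < q z" using z1 z by force
    show "0 < q z + real t * P z"
    proof (cases "\<eta> \<le> P z")
      case True
      then have "real t * \<eta> \<le> real t * P z" by (simp add: mult_left_mono)
      then show ?thesis using q_lower by linarith
    next
      case False
      then have "\<eta> \<le> q z" using z0 z unfolding \<eta>_def by (smt (verit))
      moreover have "0 \<le> real t * P z" using assms(4) z by simp
      ultimately show ?thesis using \<open>0 < \<eta>\<close> by linarith
    qed
  qed
qed simp

lemma penalty_minimizers_tendsto:
  fixes q P :: "'a::metric_space \<Rightarrow> real"
  assumes "compact K" and "continuous_on K q" and "continuous_on K P"
    and "\<forall>z\<in>K. 0 \<le> P z" and "\<forall>z\<in>K. P z = 0 \<longrightarrow> z \<noteq> x \<longrightarrow> 0 < q z"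
    and "\<forall>t. y t \<in> K" and "\<forall>t. q (y t) + real t * P (y t) \<le> 0"
  shows "y \<longlonglongrightarrow> x"
proof (rule tendstoI)
  fix \<epsilon> :: real assume "0 < \<epsilon>"
  let ?K = "K \<inter> {z. \<epsilon> \<le> dist z x}"
  have "compact ?K"
    by (intro compact_Int_closed assms(1) closed_Collect_le continuous_intros)
  then have "\<forall>\<^sub>F t in sequentially. \<forall>z\<in>?K. 0 < q z + real t * P z"
    using assms(2-5) \<open>0 < \<epsilon>\<close>
    by (intro eventually_penalized_pos) (auto intro: continuous_on_subset)
  then show "\<forall>\<^sub>F t in sequentially. dist (y t) x < \<epsilon>"
  proof eventually_elim
    case (elim t)
    show ?case
    proof (rule ccontr)
      assume "\<not> dist (y t) x < \<epsilon>"
      then have "y t \<in> ?K" using assms(6) by auto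
      with elim assms(7) show False by (meson not_less)
    qed
  qed
qed

section \<open>KKT conditions under linear independence\<close>

lemma sum_penalty_eq_0_imp:
  assumes "finite S" and "C \<subseteq> S" and "(\<Sum>a\<in>S. penalty (a \<in> C) (u a y)) = 0"
  shows "\<forall>a\<in>S - C. u a y = 0" and "\<forall>a\<in>C. 0 \<le> u a y"
proof -
  have "\<forall>a\<in>S. penalty (a \<in> C) (u a y) = 0"
    using assms(3) sum_nonneg_eq_0_iff[OF assms(1), of "\<lambda>a. penalty (a \<in> C) (u a y)"] penalty_nonneg
    by simp
  then show "\<forall>a\<in>S - C. u a y = 0" "\<forall>a\<in>C. 0 \<le> u a y"
    using assms(2) by (auto simp: penalty_eq_0_iff split: if_splits)
qed

lemma penalty_minimizers_converge:
  fixes f P :: "'a::euclidean_space \<Rightarrow> real"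
  assumes "0 < r" and cont_f: "\<And>z. isCont f z" and cont_P: "\<And>z. isCont P z"
    and P_nonneg: "\<And>z. 0 \<le> P z" and "P x = 0"
    and feasible_ge: "\<And>z. z \<in> cball x r \<Longrightarrow> P z = 0 \<Longrightarrow> f x \<le> f z"
  obtains y where "y \<longlonglongrightarrow> x" and "\<And>t. y t \<in> cball x r"
    and "\<And>t z. z \<in> cball x r \<Longrightarrow> f (y t) + ((y t - x) \<bullet> (y t - x))^2 + real t * P (y t)
      \<le> f z + ((z - x) \<bullet> (z - x))^2 + real t * P z"
proof -
  \<comment> \<open>The quartic term makes \<open>x\<close> the unique constrained minimizer in the ball.\<close>
  define \<phi> where "\<phi> t z = f z + ((z - x) \<bullet> (z - x))^2 + real t * P z" for t :: nat and z
  have "\<exists>w\<in>cball x r. \<forall>z\<in>cball x r. \<phi> t w \<le> \<phi> t z" for t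
    by (rule continuous_attains_inf[OF compact_cball])
       (use \<open>0 < r\<close> cont_f cont_P in \<open>auto simp: \<phi>_def intro!: continuous_at_imp_continuous_on continuous_intros\<close>)
  then obtain y where y_in: "\<And>t. y t \<in> cball x r"
    and y_min: "\<And>t z. z \<in> cball x r \<Longrightarrow> \<phi> t (y t) \<le> \<phi> t z"
    by metis
  have "y \<longlonglongrightarrow> x"
  proof (rule penalty_minimizers_tendsto[where q="\<lambda>z. f z + ((z - x) \<bullet> (z - x))^2 - f x"])
    show "\<forall>z\<in>cball x r. P z = 0 \<longrightarrow> z \<noteq> x \<longrightarrow> 0 < f z + ((z - x) \<bullet> (z - x))^2 - f x"
    proof (intro ballI impI)
      fix z assume z: "z \<in> cball x r" "P z = 0" and "z \<noteq> x"
      from z have "f x \<le> f z" by (rule feasible_ge)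
      moreover have "0 < ((z - x) \<bullet> (z - x))^2" using \<open>z \<noteq> x\<close> by simp
      ultimately show "0 < f z + ((z - x) \<bullet> (z - x))^2 - f x" by linarith
    qed
    show "\<forall>t. f (y t) + ((y t - x) \<bullet> (y t - x))^2 - f x + real t * P (y t) \<le> 0"
    proof
      fix t
      have "\<phi> t (y t) \<le> \<phi> t x" using y_min \<open>0 < r\<close> by simp
      then show "f (y t) + ((y t - x) \<bullet> (y t - x))^2 - f x + real t * P (y t) \<le> 0"
        using \<open>P x = 0\<close> unfolding \<phi>_def by simp
    qed
    show "continuous_on (cball x r) (\<lambda>z. f z + ((z - x) \<bullet> (z - x))^2 - f x)"
      by (intro continuous_at_imp_continuous_on ballI continuous_intros cont_f)
    show "continuous_on (cball x r) P"
      by (intro continuous_at_imp_continuous_on ballI cont_P)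
  qed (use y_in P_nonneg in auto)
  from this y_in y_min[unfolded \<phi>_def] show thesis by (rule that)
qed

lemma exists_penalty_stationary_sequence:
  fixes f :: "'b::euclidean_space \<Rightarrow> real" and u :: "'a \<Rightarrow> 'b \<Rightarrow> real"
  assumes fin: "finite S" and "C \<subseteq> S"
    and df: "\<And>x. (f has_derivative (\<lambda>h. Gf x \<bullet> h)) (at x)"
    and du: "\<And>a x. a \<in> S \<Longrightarrow> (u a has_derivative (\<lambda>h. G a x \<bullet> h)) (at x)"
    and act: "\<And>a. a \<in> S \<Longrightarrow> u a xbar = 0"
    and "0 < \<delta>"
    and lmin: "\<And>y. dist y xbar < \<delta> \<Longrightarrow> \<forall>a\<in>S - C. u a y = 0 \<Longrightarrow> \<forall>a\<in>C. 0 \<le> u a y \<Longrightarrow> f xbar \<le> f y"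
  obtains y where "y \<longlonglongrightarrow> xbar" and "\<forall>\<^sub>F t in sequentially.
      Gf (y t) + (4 * ((y t - xbar) \<bullet> (y t - xbar))) *\<^sub>R (y t - xbar)
      + real t *\<^sub>R (\<Sum>a\<in>S. penalty' (a \<in> C) (u a (y t)) *\<^sub>R G a (y t)) = 0"
proof -
  define P where "P y = (\<Sum>a\<in>S. penalty (a \<in> C) (u a y))" for y
  define V where "V t z = Gf z + (4 * ((z - xbar) \<bullet> (z - xbar))) *\<^sub>R (z - xbar)
      + real t *\<^sub>R (\<Sum>a\<in>S. penalty' (a \<in> C) (u a z) *\<^sub>R G a z)" for t :: nat and z
  define \<phi> where "\<phi> t y = f y + ((y - xbar) \<bullet> (y - xbar))^2 + real t * P y" for t :: nat and y
  have dP: "(P has_derivative (\<lambda>h. (\<Sum>a\<in>S. penalty' (a \<in> C) (u a z) *\<^sub>R G a z) \<bullet> h)) (at z)" for z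
    unfolding P_def by (rule has_derivative_penalty_sum) (rule du)
  have d\<phi>: "(\<phi> t has_derivative (\<lambda>h. V t z \<bullet> h)) (at z)" for t z
    unfolding \<phi>_def V_def
    by (rule has_derivative_eq_rhs[OF has_derivative_add[OF has_derivative_add[OF df
          has_derivative_dist_pow4] has_derivative_mult_right[OF dP]]])
       (simp add: inner_add_left)
  define r where "r = \<delta> / 2"
  have "0 < r" "r < \<delta>" using \<open>0 < \<delta>\<close> by (auto simp: r_def)
  obtain y where y_lim: "y \<longlonglongrightarrow> xbar" and y_min: "\<And>t z. z \<in> cball xbar r \<Longrightarrow> \<phi> t (y t) \<le> \<phi> t z"
  proof (rule penalty_minimizers_converge[of r f P xbar])
    show "isCont f z" "isCont P z" for z
      using df dP by (blast intro: has_derivative_continuous)+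
    show "0 \<le> P z" for z
      unfolding P_def by (intro sum_nonneg penalty_nonneg)
    show "P xbar = 0"
      unfolding P_def by (intro sum.neutral) (simp add: act penalty_def)
    show "f xbar \<le> f z" if "z \<in> cball xbar r" "P z = 0" for z
      using that \<open>r < \<delta>\<close> sum_penalty_eq_0_imp[OF fin \<open>C \<subseteq> S\<close>, of u z]
      by (intro lmin) (auto simp: P_def dist_commute)
  qed (use \<open>0 < r\<close> in \<open>auto simp: \<phi>_def\<close>)
  have "\<forall>\<^sub>F t in sequentially. V t (y t) = 0"
    using tendstoD[OF y_lim \<open>0 < r\<close>]
  proof eventually_elim
    case (elim t)
    have "\<forall>\<^sub>F z in at (y t). z \<in> ball xbar r"
      using elim by (intro eventually_at_in_open') (auto simp: dist_commute)
    then have "\<forall>\<^sub>F z in at (y t). \<phi> t (y t) \<le> \<phi> t z"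
      by eventually_elim (use y_min in auto)
    from fun_cong[OF has_derivative_local_min[OF d\<phi> this], of "V t (y t)"]
    show "V t (y t) = 0" by simp
  qed
  with y_lim show thesis unfolding V_def by (rule that)
qed

lemma KKT_multipliers_exist:
  fixes f :: "'b::euclidean_space \<Rightarrow> real" and u :: "'a \<Rightarrow> 'b \<Rightarrow> real"
  assumes fin: "finite S" and CS: "C \<subseteq> S"
    and df: "\<And>x. (f has_derivative (\<lambda>h. Gf x \<bullet> h)) (at x)" and cGf: "isCont Gf xbar"
    and du: "\<And>a x. a \<in> S \<Longrightarrow> (u a has_derivative (\<lambda>h. G a x \<bullet> h)) (at x)"
    and cG: "\<And>a. a \<in> S \<Longrightarrow> isCont (G a) xbar"
    and act: "\<And>a. a \<in> S \<Longrightarrow> u a xbar = 0"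
    and "0 < \<delta>"
    and lmin: "\<And>y. dist y xbar < \<delta> \<Longrightarrow> \<forall>a\<in>S - C. u a y = 0 \<Longrightarrow> \<forall>a\<in>C. 0 \<le> u a y \<Longrightarrow> f xbar \<le> f y"
    and indep: "\<forall>\<alpha>. (\<Sum>a\<in>S. \<alpha> a *\<^sub>R G a xbar) = 0 \<longrightarrow> (\<forall>a\<in>S. \<alpha> a = 0)"
  obtains \<gamma> where "Gf xbar = (\<Sum>a\<in>S. \<gamma> a *\<^sub>R G a xbar)" and "\<And>a. a \<in> C \<Longrightarrow> 0 \<le> \<gamma> a"
proof -
  obtain y where y_lim: "y \<longlonglongrightarrow> xbar" and stationary: "\<forall>\<^sub>F t in sequentially.
      Gf (y t) + (4 * ((y t - xbar) \<bullet> (y t - xbar))) *\<^sub>R (y t - xbar)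
      + real t *\<^sub>R (\<Sum>a\<in>S. penalty' (a \<in> C) (u a (y t)) *\<^sub>R G a (y t)) = 0"
    using fin CS df du act \<open>0 < \<delta>\<close> lmin by (rule exists_penalty_stationary_sequence)
  define R where "R t = Gf (y t) + (4 * ((y t - xbar) \<bullet> (y t - xbar))) *\<^sub>R (y t - xbar)" for t
  define \<gamma> where "\<gamma> t a = - (real t * penalty' (a \<in> C) (u a (y t)))" for t a
  have d0: "(\<lambda>t. y t - xbar) \<longlonglongrightarrow> 0"
    using tendsto_diff[OF y_lim tendsto_const[of xbar]] by simp
  have "R \<longlonglongrightarrow> Gf xbar + (4 * ((0::'b) \<bullet> 0)) *\<^sub>R 0"
    unfolding R_def
    by (intro tendsto_add tendsto_scaleR tendsto_mult tendsto_const tendsto_inner[OF d0 d0] d0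
        isCont_tendsto_compose[OF cGf y_lim])
  then have R_lim: "R \<longlonglongrightarrow> Gf xbar" by simp
  have G_lim: "(\<lambda>t. G a (y t)) \<longlonglongrightarrow> G a xbar" if "a \<in> S" for a
    using cG[OF that] y_lim by (rule isCont_tendsto_compose)
  have "\<forall>\<^sub>F t in sequentially. R t = (\<Sum>a\<in>S. \<gamma> t a *\<^sub>R G a (y t))"
    using stationary
    by eventually_elim (simp add: R_def \<gamma>_def scaleR_sum_right sum_negf eq_neg_iff_add_eq_0)
  with fin G_lim indep R_lim obtain c where c_lim: "\<And>a. a \<in> S \<Longrightarrow> (\<lambda>t. \<gamma> t a) \<longlonglongrightarrow> c a"
    and Gf_xbar: "Gf xbar = (\<Sum>a\<in>S. c a *\<^sub>R G a xbar)"
    by (rule tendsto_lincomb_coeffs) (assumption | rule that)+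
  have "0 \<le> c a" if "a \<in> C" for a
  proof (rule tendsto_lowerbound)
    show "(\<lambda>t. \<gamma> t a) \<longlonglongrightarrow> c a" using c_lim CS that by blast
    show "\<forall>\<^sub>F t in sequentially. 0 \<le> \<gamma> t a"
      using that penalty'_True_nonpos by (simp add: \<gamma>_def mult_nonneg_nonpos)
  qed simp
  with Gf_xbar show thesis by (rule that)
qed

section \<open>Gradients of C2 functions\<close>

lemma GDERIV_unique:
  fixes f :: "'a::real_inner \<Rightarrow> real"
  assumes "GDERIV f x :> D" and "GDERIV f x :> D'"
  shows "D = D'"
proof -
  have "(\<lambda>h. h \<bullet> D) = (\<lambda>h. h \<bullet> D')"
    using assms unfolding gderiv_def by (rule has_derivative_unique)
  then have "(D - D') \<bullet> D = (D - D') \<bullet> D'" by (rule fun_cong)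
  then have "(D - D') \<bullet> (D - D') = 0" by (simp add: inner_diff_right)
  then show ?thesis by simp
qed

lemma grad_eqI: "GDERIV f x :> D \<Longrightarrow> grad f x = D"
  unfolding grad_def by (rule some_equality) (use GDERIV_unique in blast)+

lemma C2_has_derivative_grad:
  assumes "C2 \<phi>"
  shows "(\<phi> has_derivative (\<lambda>h. grad \<phi> x \<bullet> h)) (at x)"
proof -
  obtain G where G: "\<And>x. GDERIV \<phi> x :> G x"
    using assms unfolding C2_def by blast
  show ?thesis
    using G[of x] unfolding grad_eqI[OF G[of x]] gderiv_def by (simp add: inner_commute)
qed

lemma C2_isCont_grad:
  assumes "C2 \<phi>"
  shows "isCont (grad \<phi>) x"
proof -
  obtain G G' where G: "\<And>x. GDERIV \<phi> x :> G x" and G': "\<And>x. (G has_derivative G' x) (at x)"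
    using assms unfolding C2_def by blast
  have "grad \<phi> = G" by (intro ext grad_eqI G)
  with has_derivative_continuous[OF G'] show ?thesis by simp
qed

lemma C2_isCont: "C2 \<phi> \<Longrightarrow> isCont \<phi> x"
  by (rule has_derivative_continuous[OF C2_has_derivative_grad])

section \<open>The tightened problem of MPOC\<close>

text \<open>The tightened nonlinear program (TNLP) at x: the active g j remain inequality constraints,
  while h i, F1 m for m \<in> a01 and F2 m for m \<in> a10 \<union> a00 become equality constraints.\<close>

definition mpoc_constraint ::
  "('i \<Rightarrow> real ^ 'n \<Rightarrow> real) \<Rightarrow> ('j \<Rightarrow> real ^ 'n \<Rightarrow> real) \<Rightarrow> (nat \<Rightarrow> real ^ 'n \<Rightarrow> real) \<Rightarrow>
   (nat \<Rightarrow> real ^ 'n \<Rightarrow> real) \<Rightarrow> 'i + 'j + nat + nat \<Rightarrow> real ^ 'n \<Rightarrow> real" where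
  "mpoc_constraint h g F1 F2 = case_sum h (case_sum g (case_sum F1 F2))"

definition tnlp_index ::
  "'i set \<Rightarrow> ('j \<Rightarrow> real ^ 'n \<Rightarrow> real) \<Rightarrow> 'j set \<Rightarrow> (nat \<Rightarrow> real ^ 'n \<Rightarrow> real) \<Rightarrow>
   (nat \<Rightarrow> real ^ 'n \<Rightarrow> real) \<Rightarrow> nat \<Rightarrow> real ^ 'n \<Rightarrow> ('i + 'j + nat + nat) set" where
  "tnlp_index I g J F1 F2 k x =
    I <+> (J0 g J x <+> (a01 F1 F2 k x <+> (a10 F1 F2 k x \<union> a00 F1 F2 k x)))"

definition tnlp_ineq_index ::
  "('j \<Rightarrow> real ^ 'n \<Rightarrow> real) \<Rightarrow> 'j set \<Rightarrow> real ^ 'n \<Rightarrow> ('i + 'j + nat + nat) set" where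
  "tnlp_ineq_index g J x = Inr ` Inl ` J0 g J x"

lemma finite_active_index_sets:
  assumes "finite J"
  shows "finite (J0 g J x)" "finite (a01 F1 F2 k x)" "finite (a10 F1 F2 k x)" "finite (a00 F1 F2 k x)"
  using assms by (simp_all add: J0_def a01_def a10_def a00_def)

lemma finite_tnlp_index: "finite I \<Longrightarrow> finite J \<Longrightarrow> finite (tnlp_index I g J F1 F2 k x)"
  by (simp add: tnlp_index_def finite_active_index_sets)

lemma tnlp_ineq_index_subset: "tnlp_ineq_index g J x \<subseteq> tnlp_index I g J F1 F2 k x"
  by (auto simp: tnlp_ineq_index_def tnlp_index_def)

lemma sum_tnlp_index:
  fixes \<phi> :: "'i + 'j + nat + nat \<Rightarrow> 'b::comm_monoid_add"
  assumes "finite I" and "finite J"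
  shows "(\<Sum>a\<in>tnlp_index I g J F1 F2 k x. \<phi> a) = (\<Sum>i\<in>I. \<phi> (Inl i))
    + (\<Sum>j\<in>J0 g J x. \<phi> (Inr (Inl j))) + (\<Sum>m\<in>a01 F1 F2 k x. \<phi> (Inr (Inr (Inl m))))
    + (\<Sum>m\<in>a10 F1 F2 k x \<union> a00 F1 F2 k x. \<phi> (Inr (Inr (Inr m))))"
  using assms by (simp add: tnlp_index_def sum.Plus finite_active_index_sets o_def add.assoc)

lemma C2_mpoc_constraint:
  assumes "\<forall>i\<in>I. C2 (h i)" and "\<forall>j\<in>J. C2 (g j)" and "\<forall>m\<in>{1..k}. C2 (F1 m) \<and> C2 (F2 m)"
    and "a \<in> tnlp_index I g J F1 F2 k x"
  shows "C2 (mpoc_constraint h g F1 F2 a)"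
  using assms by (auto simp: tnlp_index_def mpoc_constraint_def J0_def a01_def a10_def a00_def)

lemma mpoc_constraint_eq_0:
  assumes "x \<in> mpoc_feasible h I g J F1 F2 k" and "a \<in> tnlp_index I g J F1 F2 k x"
  shows "mpoc_constraint h g F1 F2 a x = 0"
  using assms
  by (auto simp: mpoc_feasible_def tnlp_index_def mpoc_constraint_def J0_def a01_def a10_def a00_def)

lemma mpoc_feasibleI_tnlp:
  assumes x: "x \<in> mpoc_feasible h I g J F1 F2 k"
    and g_pos: "\<forall>j\<in>J - J0 g J x. 0 < g j y" and F2_pos: "\<forall>m\<in>a01 F1 F2 k x. 0 < F2 m y"
    and eq: "\<forall>a\<in>tnlp_index I g J F1 F2 k x - tnlp_ineq_index g J x. mpoc_constraint h g F1 F2 a y = 0"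
    and ineq: "\<forall>a\<in>tnlp_ineq_index g J x. 0 \<le> mpoc_constraint h g F1 F2 a y"
  shows "y \<in> mpoc_feasible h I g J F1 F2 k"
proof -
  have h_y: "h i y = 0" if "i \<in> I" for i
    using eq[rule_format, of "Inl i"] that
    by (auto simp: tnlp_index_def tnlp_ineq_index_def mpoc_constraint_def)
  have g_y: "0 \<le> g j y" if "j \<in> J" for j
  proof (cases "j \<in> J0 g J x")
    case True
    then show ?thesis
      using ineq[rule_format, of "Inr (Inl j)"] by (auto simp: tnlp_ineq_index_def mpoc_constraint_def)
  next
    case False
    then show ?thesis using g_pos that by (auto intro: less_imp_le)
  qed
  have F_y: "F1 m y * F2 m y = 0 \<and> 0 \<le> F2 m y" if m: "m \<in> {1..k}" for m
  proof -
    from x m have "F1 m x * F2 m x = 0" "0 \<le> F2 m x" by (auto simp: mpoc_feasible_def)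
    with m consider "m \<in> a01 F1 F2 k x" | "m \<in> a10 F1 F2 k x \<union> a00 F1 F2 k x"
      by (auto simp: a01_def a10_def a00_def less_le)
    then show ?thesis
    proof cases
      case 1
      then have "F1 m y = 0"
        using eq[rule_format, of "Inr (Inr (Inl m))"]
        by (auto simp: tnlp_index_def tnlp_ineq_index_def mpoc_constraint_def)
      with 1 F2_pos show ?thesis by (auto intro: less_imp_le)
    next
      case 2
      then have "F2 m y = 0"
        using eq[rule_format, of "Inr (Inr (Inr m))"]
        by (auto simp: tnlp_index_def tnlp_ineq_index_def mpoc_constraint_def)
      then show ?thesis by simp
    qed
  qed
  from h_y g_y F_y show ?thesis by (simp add: mpoc_feasible_def)
qed

lemma eventually_inactive_constraints_pos:
  assumes x: "x \<in> mpoc_feasible h I g J F1 F2 k" and "finite J"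
    and cont_g: "\<forall>j\<in>J. isCont (g j) x" and cont_F2: "\<forall>m\<in>{1..k}. isCont (F2 m) x"
  shows "\<forall>\<^sub>F y in nhds x. (\<forall>j\<in>J - J0 g J x. 0 < g j y) \<and> (\<forall>m\<in>a01 F1 F2 k x. 0 < F2 m y)"
proof -
  have pos: "\<forall>\<^sub>F y in nhds x. 0 < \<psi> y" if "isCont \<psi> x" "0 < \<psi> x" for \<psi> :: "_ \<Rightarrow> real"
    using that unfolding isCont_def tendsto_at_iff_tendsto_nhds by (rule order_tendstoD(1))
  have "\<forall>\<^sub>F y in nhds x. \<forall>j\<in>J - J0 g J x. 0 < g j y"
    using x cont_g \<open>finite J\<close>
    by (intro eventually_ball_finite ballI pos) (auto simp: mpoc_feasible_def J0_def less_le)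
  moreover have "\<forall>\<^sub>F y in nhds x. \<forall>m\<in>a01 F1 F2 k x. 0 < F2 m y"
    using cont_F2 \<open>finite J\<close>
    by (intro eventually_ball_finite ballI pos) (auto simp: a01_def finite_active_index_sets)
  ultimately show ?thesis by (rule eventually_conj)
qed

lemma local_minimizer_tnlp:
  assumes lmin: "local_minimizer f (mpoc_feasible h I g J F1 F2 k) x" and "finite J"
    and "\<forall>j\<in>J. isCont (g j) x" and "\<forall>m\<in>{1..k}. isCont (F2 m) x"
  obtains \<delta> where "0 < \<delta>"
    and "\<And>y. dist y x < \<delta> \<Longrightarrow>
      \<forall>a\<in>tnlp_index I g J F1 F2 k x - tnlp_ineq_index g J x. mpoc_constraint h g F1 F2 a y = 0 \<Longrightarrow>
      \<forall>a\<in>tnlp_ineq_index g J x. 0 \<le> mpoc_constraint h g F1 F2 a y \<Longrightarrow> f x \<le> f y"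
proof -
  obtain \<epsilon> where "0 < \<epsilon>" and x: "x \<in> mpoc_feasible h I g J F1 F2 k"
    and \<epsilon>: "\<And>y. y \<in> mpoc_feasible h I g J F1 F2 k \<Longrightarrow> dist y x < \<epsilon> \<Longrightarrow> f x \<le> f y"
    using lmin unfolding local_minimizer_def by blast
  from eventually_inactive_constraints_pos[OF x assms(2-4)]
  obtain d where "0 < d" and d: "\<And>y. dist y x < d \<Longrightarrow>
      (\<forall>j\<in>J - J0 g J x. 0 < g j y) \<and> (\<forall>m\<in>a01 F1 F2 k x. 0 < F2 m y)"
    unfolding eventually_nhds_metric by (metis dist_commute)
  show thesis
  proof (rule that[of "min d \<epsilon>"])
    show "0 < min d \<epsilon>" using \<open>0 < d\<close> \<open>0 < \<epsilon>\<close> by simp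
    fix y assume "dist y x < min d \<epsilon>"
      and "\<forall>a\<in>tnlp_index I g J F1 F2 k x - tnlp_ineq_index g J x. mpoc_constraint h g F1 F2 a y = 0"
      and "\<forall>a\<in>tnlp_ineq_index g J x. 0 \<le> mpoc_constraint h g F1 F2 a y"
    with d x have "y \<in> mpoc_feasible h I g J F1 F2 k" by (auto intro: mpoc_feasibleI_tnlp)
    with \<epsilon> \<open>dist y x < min d \<epsilon>\<close> show "f x \<le> f y" by simp
  qed
qed

lemma LICQ_imp_tnlp_independent:
  assumes "finite I" and "finite J" and licq: "LICQ h I g J F1 F2 k x"
  shows "\<forall>\<alpha>. (\<Sum>a\<in>tnlp_index I g J F1 F2 k x. \<alpha> a *\<^sub>R grad (mpoc_constraint h g F1 F2 a) x) = 0
    \<longrightarrow> (\<forall>a\<in>tnlp_index I g J F1 F2 k x. \<alpha> a = 0)"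
proof (intro allI impI)
  fix \<alpha> :: "_ \<Rightarrow> real"
  assume zero: "(\<Sum>a\<in>tnlp_index I g J F1 F2 k x. \<alpha> a *\<^sub>R grad (mpoc_constraint h g F1 F2 a) x) = 0"
  \<comment> \<open>The tightened problem has no multiplier for DF1 m with m \<in> a00; give it coefficient 0.\<close>
  define c where "c m = (if m \<in> a01 F1 F2 k x then \<alpha> (Inr (Inr (Inl m))) else 0)" for m
  have "(\<Sum>m\<in>a01 F1 F2 k x \<union> a00 F1 F2 k x. c m *\<^sub>R grad (F1 m) x)
      = (\<Sum>m\<in>a01 F1 F2 k x. \<alpha> (Inr (Inr (Inl m))) *\<^sub>R grad (F1 m) x)"
    by (subst sum.union_disjoint)
       (auto simp: c_def finite_active_index_sets[OF \<open>finite J\<close>] a01_def a00_def intro!: sum.neutral)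
  with zero have "(\<Sum>i\<in>I. \<alpha> (Inl i) *\<^sub>R grad (h i) x)
      + (\<Sum>j\<in>J0 g J x. \<alpha> (Inr (Inl j)) *\<^sub>R grad (g j) x)
      + (\<Sum>m\<in>a01 F1 F2 k x \<union> a00 F1 F2 k x. c m *\<^sub>R grad (F1 m) x)
      + (\<Sum>m\<in>a10 F1 F2 k x \<union> a00 F1 F2 k x. \<alpha> (Inr (Inr (Inr m))) *\<^sub>R grad (F2 m) x) = 0"
    by (simp add: sum_tnlp_index[OF assms(1,2)] mpoc_constraint_def)
  then have "(\<forall>i\<in>I. \<alpha> (Inl i) = 0) \<and> (\<forall>j\<in>J0 g J x. \<alpha> (Inr (Inl j)) = 0)
      \<and> (\<forall>m\<in>a01 F1 F2 k x \<union> a00 F1 F2 k x. c m = 0)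
      \<and> (\<forall>m\<in>a10 F1 F2 k x \<union> a00 F1 F2 k x. \<alpha> (Inr (Inr (Inr m))) = 0)"
    by (rule licq[unfolded LICQ_def, rule_format])
  then show "\<forall>a\<in>tnlp_index I g J F1 F2 k x. \<alpha> a = 0"
    by (auto simp: tnlp_index_def c_def ball_Un cong: ball_cong)
qed

lemma T_stationaryI_tnlp:
  assumes "finite I" and "finite J" and "x \<in> mpoc_feasible h I g J F1 F2 k"
    and grad_f: "grad f x = (\<Sum>a\<in>tnlp_index I g J F1 F2 k x. \<gamma> a *\<^sub>R grad (mpoc_constraint h g F1 F2 a) x)"
    and sign: "\<And>a. a \<in> tnlp_ineq_index g J x \<Longrightarrow> 0 \<le> \<gamma> a"
  shows "T_stationary f h I g J F1 F2 k x"
proof -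
  have "(\<Sum>m\<in>a10 F1 F2 k x \<union> a00 F1 F2 k x. \<gamma> (Inr (Inr (Inr m))) *\<^sub>R grad (F2 m) x)
      = (\<Sum>m\<in>a10 F1 F2 k x. \<gamma> (Inr (Inr (Inr m))) *\<^sub>R grad (F2 m) x)
        + (\<Sum>m\<in>a00 F1 F2 k x. \<gamma> (Inr (Inr (Inr m))) *\<^sub>R grad (F2 m) x)"
    by (rule sum.union_disjoint) (auto simp: finite_active_index_sets[OF \<open>finite J\<close>] a10_def a00_def)
  with grad_f have "grad f x = (\<Sum>i\<in>I. \<gamma> (Inl i) *\<^sub>R grad (h i) x)
      + (\<Sum>j\<in>J0 g J x. \<gamma> (Inr (Inl j)) *\<^sub>R grad (g j) x)
      + (\<Sum>m\<in>a01 F1 F2 k x. \<gamma> (Inr (Inr (Inl m))) *\<^sub>R grad (F1 m) x)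
      + (\<Sum>m\<in>a10 F1 F2 k x. \<gamma> (Inr (Inr (Inr m))) *\<^sub>R grad (F2 m) x)
      + (\<Sum>m\<in>a00 F1 F2 k x. 0 *\<^sub>R grad (F1 m) x + \<gamma> (Inr (Inr (Inr m))) *\<^sub>R grad (F2 m) x)"
    by (simp add: sum_tnlp_index[OF assms(1,2)] mpoc_constraint_def add.assoc)
  moreover have "\<forall>j\<in>J0 g J x. 0 \<le> \<gamma> (Inr (Inl j))"
    using sign by (simp add: tnlp_ineq_index_def)
  \<comment> \<open>With \<rho>1 = 0 on a00 the sign condition of T-stationarity holds trivially.\<close>
  ultimately show ?thesis
    unfolding T_stationary_def
    by (intro conjI assms(3) exI[of _ "\<lambda>i. \<gamma> (Inl i)"] exI[of _ "\<lambda>j. \<gamma> (Inr (Inl j))"]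
        exI[of _ "\<lambda>m. \<gamma> (Inr (Inr (Inl m)))"] exI[of _ "\<lambda>m. \<gamma> (Inr (Inr (Inr m)))"]
        exI[of _ "\<lambda>_. 0"] exI[of _ "\<lambda>m. \<gamma> (Inr (Inr (Inr m)))"]) simp_all
qed

theorem mainTheorem3:
  fixes f :: "real ^ 'n \<Rightarrow> real"
    and h :: "'i \<Rightarrow> real ^ 'n \<Rightarrow> real" and I :: "'i set"
    and g :: "'j \<Rightarrow> real ^ 'n \<Rightarrow> real" and J :: "'j set"
    and F1 F2 :: "nat \<Rightarrow> real ^ 'n \<Rightarrow> real" and k :: nat
    and xbar :: "real ^ 'n"
  assumes "finite I" and "finite J"
    and "C2 f" and "\<forall>i\<in>I. C2 (h i)" and "\<forall>j\<in>J. C2 (g j)"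
    and "\<forall>m\<in>{1..k}. C2 (F1 m) \<and> C2 (F2 m)"
    and "local_minimizer f (mpoc_feasible h I g J F1 F2 k) xbar"
    and "LICQ h I g J F1 F2 k xbar"
  shows "T_stationary f h I g J F1 F2 k xbar"
proof -
  let ?S = "tnlp_index I g J F1 F2 k xbar" and ?u = "mpoc_constraint h g F1 F2"
  have xbar: "xbar \<in> mpoc_feasible h I g J F1 F2 k"
    using assms(7) by (simp add: local_minimizer_def)
  have "\<forall>j\<in>J. isCont (g j) xbar" "\<forall>m\<in>{1..k}. isCont (F2 m) xbar"
    using assms(5,6) C2_isCont by blast+
  with assms(7,2) obtain \<delta> where "0 < \<delta>" and lmin: "\<And>y. dist y xbar < \<delta> \<Longrightarrow>
      \<forall>a\<in>?S - tnlp_ineq_index g J xbar. ?u a y = 0 \<Longrightarrow>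
      \<forall>a\<in>tnlp_ineq_index g J xbar. 0 \<le> ?u a y \<Longrightarrow> f xbar \<le> f y"
    by (rule local_minimizer_tnlp) (rule that)
  have C2_u: "C2 (?u a)" if "a \<in> ?S" for a
    using assms(4-6) that by (rule C2_mpoc_constraint)
  obtain \<gamma> where "grad f xbar = (\<Sum>a\<in>?S. \<gamma> a *\<^sub>R grad (?u a) xbar)"
    and "\<And>a. a \<in> tnlp_ineq_index g J xbar \<Longrightarrow> 0 \<le> \<gamma> a"
    using finite_tnlp_index[OF assms(1,2)] tnlp_ineq_index_subset
      C2_has_derivative_grad[OF assms(3)] C2_isCont_grad[OF assms(3)]
      C2_has_derivative_grad[OF C2_u] C2_isCont_grad[OF C2_u] mpoc_constraint_eq_0[OF xbar]
      \<open>0 < \<delta>\<close> lmin LICQ_imp_tnlp_independent[OF assms(1,2,8)]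
    by (rule KKT_multipliers_exist) (assumption | rule that)+
  with assms(1,2) xbar show ?thesis by (rule T_stationaryI_tnlp)
qed

end
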